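(* Consider the following strict partial orders on $P_f(\mathbb{N}^+)$: $A\prec_{gen}B$ iff $A=\emptyset$ and $B\neq\emptyset$; $A\prec_{BFS}B$ iff $umin(A)>umin(B)$; $A\prec_{DFS}B$ iff $umax(A)<umax(B)$; $A\prec_{MNS}B$ iff $A\subsetneq B$; $A\prec_{MCS}B$ iff $|A|<|B|$; $A\prec_{LBFS}B$ iff $umin(B-A)<umin(A-B)$; $A\prec_{LDFS}B$ iff $umax(A-B)<umax(B-A)$. Say that search $S'$ extends search $S$ if for all $A,B$, $A\prec_S B$ implies $A\prec_{S'}B$ (equivalently, for every finite graph $G$ every $\mathrm{TBLS}$-ordering of $G$ for $\prec_{S'}$ is a $\mathrm{TBLS}$-ordering of $G$ for $\prec_S$). Then: BFS, DFS and MNS each extend Generic search ($\prec_{gen}$); LBFS extends BFS; LDFS extends DFS; LBFS, LDFS and MCS each extend MNS.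
   Context: $P_f(\mathbb{N}^+)$ is the set of finite subsets of positive integers; $umin(A)=\min A$ for $A\neq\emptyset$ and $umin(\emptyset)=\infty$; $umax(A)=\max A$ for $A\neq\emptyset$ and $umax(\emptyset)=0$. Given a finite graph $G=(V,E)$ with $n$ vertices, a strict partial order $\prec$ on $P_f(\mathbb{N}^+)$ and an ordering $\tau$ of $V$, $\mathrm{TBLS}(G,\prec,\tau)$ is the procedure: set $label(v)=\emptyset$ for every $v$; for $i=1,\dots,n$: let Eligible be the set of unnumbered vertices $x$ such that there is no unnumbered vertex $y$ with $label(x)\prec label(y)$; let $v$ be the first vertex of Eligible in $\tau$; set $\sigma(i)=v$ ($v$ becomes numbered); for every unnumbered neighbour $w$ of $v$ replace $label(w)$ by $label(w)\cup\{i\}$; output $\sigma$. A TBLS-ordering of $G$ for $\prec$ is any output $\mathrm{TBLS}(G,\prec,\tau)$ over all orderings $\tau$ of $V$. *)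

theory Defs
  imports Main "HOL-Library.Extended_Nat"
begin

definition Pf :: "nat set set" where
  "Pf = {A. finite A \<and> 0 \<notin> A}"

definition umin :: "nat set \<Rightarrow> enat" where
  "umin A = (if A = {} then \<infinity> else enat (Min A))"

definition umax :: "nat set \<Rightarrow> nat" where
  "umax A = (if A = {} then 0 else Max A)"

definition prec_gen :: "nat set \<Rightarrow> nat set \<Rightarrow> bool" where
  "prec_gen A B \<longleftrightarrow> A = {} \<and> B \<noteq> {}"

definition prec_BFS :: "nat set \<Rightarrow> nat set \<Rightarrow> bool" where
  "prec_BFS A B \<longleftrightarrow> umin A > umin B"

definition prec_DFS :: "nat set \<Rightarrow> nat set \<Rightarrow> bool" where
  "prec_DFS A B \<longleftrightarrow> umax A < umax B"

definition prec_MNS :: "nat set \<Rightarrow> nat set \<Rightarrow> bool" where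
  "prec_MNS A B \<longleftrightarrow> A \<subset> B"

definition prec_MCS :: "nat set \<Rightarrow> nat set \<Rightarrow> bool" where
  "prec_MCS A B \<longleftrightarrow> card A < card B"

definition prec_LBFS :: "nat set \<Rightarrow> nat set \<Rightarrow> bool" where
  "prec_LBFS A B \<longleftrightarrow> umin (B - A) < umin (A - B)"

definition prec_LDFS :: "nat set \<Rightarrow> nat set \<Rightarrow> bool" where
  "prec_LDFS A B \<longleftrightarrow> umax (A - B) < umax (B - A)"

definition search_extends ::
  "(nat set \<Rightarrow> nat set \<Rightarrow> bool) \<Rightarrow> (nat set \<Rightarrow> nat set \<Rightarrow> bool) \<Rightarrow> bool" where
  "search_extends S S' \<longleftrightarrow> (\<forall>A\<in>Pf. \<forall>B\<in>Pf. S A B \<longrightarrow> S' A B)"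

end

theory Submission
  imports Defs
begin

text \<open>Passing from BFS to LBFS (and dually from DFS to LDFS) rests on one
  observation: if \<open>umin B < umin A\<close>, then the least element of \<open>B\<close> is not
  in \<open>A\<close>, so removing \<open>A\<close> from \<open>B\<close> does not change \<open>umin B\<close>, while removing
  \<open>B\<close> from \<open>A\<close> can only increase \<open>umin A\<close>.  The refinements of MNS use
  that \<open>A \<subset> B\<close> makes \<open>A - B\<close> empty and \<open>B - A\<close> nonempty; the remaining
  extensions compare the two orders directly.\<close>

lemma umin_empty [simp]: "umin {} = \<infinity>"
  by (simp add: umin_def)

lemma umin_le: "finite A \<Longrightarrow> a \<in> A \<Longrightarrow> umin A \<le> enat a"
  by (auto simp: umin_def)

lemma umin_antimono: "finite B \<Longrightarrow> A \<subseteq> B \<Longrightarrow> umin B \<le> umin A"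
  by (auto simp: umin_def intro: Min_antimono)

lemma umin_diff_eq:
  assumes "finite A" "finite B" "umin B < umin A"
  shows "umin (B - A) = umin B"
proof -
  have "B \<noteq> {}" using assms(3) by (cases "B = {}") auto
  then have umin_B: "umin B = enat (Min B)" by (simp add: umin_def)
  have "Min B \<in> B" using assms(2) \<open>B \<noteq> {}\<close> by simp
  moreover have "Min B \<notin> A"
    using assms(3) umin_le[OF assms(1), of "Min B"] umin_B by auto
  ultimately have "umin (B - A) \<le> umin B"
    using umin_le[OF _, of "B - A" "Min B"] assms(2) umin_B by simp
  then show ?thesis
    using umin_antimono[OF assms(2), of "B - A"] by simp
qed

lemma umax_le: "finite A \<Longrightarrow> a \<in> A \<Longrightarrow> a \<le> umax A"
  by (auto simp: umax_def)

lemma umax_mono: "finite B \<Longrightarrow> A \<subseteq> B \<Longrightarrow> umax A \<le> umax B"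
  by (auto simp: umax_def intro: Max_mono)

lemma umax_empty [simp]: "umax {} = 0"
  by (simp add: umax_def)

lemma umax_pos: "finite A \<Longrightarrow> 0 \<notin> A \<Longrightarrow> A \<noteq> {} \<Longrightarrow> 0 < umax A"
proof -
  assume "finite A" "0 \<notin> A" "A \<noteq> {}"
  then have "Max A \<in> A" by simp
  with \<open>0 \<notin> A\<close> \<open>A \<noteq> {}\<close> show ?thesis by (auto simp: umax_def gr0I)
qed

lemma umax_diff_eq:
  assumes "finite A" "finite B" "umax A < umax B"
  shows "umax (B - A) = umax B"
proof -
  have "B \<noteq> {}" using assms(3) by (cases "B = {}") (auto simp: umax_def)
  then have umax_B: "umax B = Max B" by (simp add: umax_def)
  have "Max B \<in> B" using assms(2) \<open>B \<noteq> {}\<close> by simp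
  moreover have "Max B \<notin> A"
    using assms(3) umax_le[OF assms(1), of "Max B"] umax_B by auto
  ultimately have "umax B \<le> umax (B - A)"
    using umax_le[OF _, of "B - A" "Max B"] assms(2) umax_B by simp
  then show ?thesis
    using umax_mono[OF assms(2), of "B - A"] by simp
qed

lemma search_extends_gen_BFS: "search_extends prec_gen prec_BFS"
  by (auto simp: search_extends_def prec_gen_def prec_BFS_def umin_def)

lemma search_extends_gen_DFS: "search_extends prec_gen prec_DFS"
  unfolding search_extends_def prec_gen_def prec_DFS_def Pf_def
  using umax_pos by auto

lemma search_extends_gen_MNS: "search_extends prec_gen prec_MNS"
  by (auto simp: search_extends_def prec_gen_def prec_MNS_def)

lemma search_extends_BFS_LBFS: "search_extends prec_BFS prec_LBFS"
  unfolding search_extends_def prec_BFS_def prec_LBFS_def Pf_def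
proof (intro ballI impI)
  fix A B :: "nat set" assume "A \<in> {A. finite A \<and> 0 \<notin> A}" "B \<in> {A. finite A \<and> 0 \<notin> A}"
    and less: "umin B < umin A"
  then have "finite A" "finite B" by auto
  have "umin (B - A) = umin B" using umin_diff_eq[OF \<open>finite A\<close> \<open>finite B\<close> less] .
  also have "\<dots> < umin A" by (fact less)
  also have "\<dots> \<le> umin (A - B)" using umin_antimono[OF \<open>finite A\<close>] by blast
  finally show "umin (B - A) < umin (A - B)" .
qed

lemma search_extends_DFS_LDFS: "search_extends prec_DFS prec_LDFS"
  unfolding search_extends_def prec_DFS_def prec_LDFS_def Pf_def
proof (intro ballI impI)
  fix A B :: "nat set" assume "A \<in> {A. finite A \<and> 0 \<notin> A}" "B \<in> {A. finite A \<and> 0 \<notin> A}"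
    and less: "umax A < umax B"
  then have "finite A" "finite B" by auto
  have "umax (A - B) \<le> umax A" using umax_mono[OF \<open>finite A\<close>] by blast
  also have "\<dots> < umax B" by (fact less)
  also have "\<dots> = umax (B - A)" using umax_diff_eq[OF \<open>finite A\<close> \<open>finite B\<close> less] by simp
  finally show "umax (A - B) < umax (B - A)" .
qed

lemma search_extends_MNS_LBFS: "search_extends prec_MNS prec_LBFS"
  by (auto simp: search_extends_def prec_MNS_def prec_LBFS_def umin_def)

lemma search_extends_MNS_LDFS: "search_extends prec_MNS prec_LDFS"
  unfolding search_extends_def prec_MNS_def prec_LDFS_def Pf_def
proof (intro ballI impI)
  fix A B :: "nat set" assume "A \<in> {A. finite A \<and> 0 \<notin> A}" "B \<in> {A. finite A \<and> 0 \<notin> A}"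
    and "A \<subset> B"
  then have "A - B = {}" "B - A \<noteq> {}" "finite (B - A)" "0 \<notin> B - A" by auto
  then show "umax (A - B) < umax (B - A)" using umax_pos[of "B - A"] umax_empty by metis
qed

lemma search_extends_MNS_MCS: "search_extends prec_MNS prec_MCS"
  by (auto simp: search_extends_def prec_MNS_def prec_MCS_def Pf_def intro: psubset_card_mono)

theorem theorem8:
  shows "search_extends prec_gen prec_BFS
       \<and> search_extends prec_gen prec_DFS
       \<and> search_extends prec_gen prec_MNS
       \<and> search_extends prec_BFS prec_LBFS
       \<and> search_extends prec_DFS prec_LDFS
       \<and> search_extends prec_MNS prec_LBFS
       \<and> search_extends prec_MNS prec_LDFS
       \<and> search_extends prec_MNS prec_MCS"
  using search_extends_gen_BFS search_extends_gen_DFS search_extends_gen_MNS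
    search_extends_BFS_LBFS search_extends_DFS_LDFS search_extends_MNS_LBFS
    search_extends_MNS_LDFS search_extends_MNS_MCS
  by blast

end
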